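(* Let $\mathcal{L}$ be a lattice and $\{a_I\}_{I\in\mathcal{L}}$ real numbers such that $\{|a_I|\}_{I\in\mathcal{L}}$ is a Carleson sequence, and suppose the balayage $g=\sum_{I\in\mathcal{L}}\frac{1}{|I|}\mathbf{1}_Ia_I$ is well defined, i.e. $\sum_{I\in\mathcal{L}}\frac{1}{|I|}\mathbf{1}_I|a_I|$ is finite a.e. and locally integrable. Then $g$ belongs to martingale BMO and $$\|g\|_{\mathrm{BMO}}\le 2\,\mathrm{Carl}(|a_I|).$$
   Context: Work on $\mathbb{R}$ with Lebesgue measure. A lattice $\mathcal{L}$ is a collection of nondegenerate finite intervals of $\mathbb{R}$ which is a union of generations $\mathcal{L}_k$, $k\in\mathbb{Z}$, each $\mathcal{L}_k$ a collection of pairwise disjoint intervals covering $\mathbb{R}$, with every $I\in\mathcal{L}_k$ a finite disjoint union of intervals of $\mathcal{L}_{k+1}$ (possibly of $I$ alone). For $I\in\mathcal{L}$ with $\mathrm{rk}(I)=k$ (the largest $k$ with $I\in\mathcal{L}_k$), $\mathrm{child}(I)$ is the set of $J\in\mathcal{L}_{k+1}$ with $J\subseteq I$. $\mathfrak{A}_{-\infty}^{0,\mathrm{fin}}$ is the collection of sets $\bigcup_kI_k$ ($I_k\in\mathcal{L}_k$, $I_k\subseteq I_{k-1}$) of finite measure. $\langle f\rangle_I=\frac1{|I|}\int_If$, $\mathbb{E}_If=\langle f\rangle_I\mathbf{1}_I$, $\Delta_If=-\mathbb{E}_If+\sum_{J\in\mathrm{child}(I)}\mathbb{E}_Jf$.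 A sequence of nonnegative numbers $\{b_I\}_{I\in\mathcal{L}}$ is a Carleson sequence if there is $C>0$ with $\frac1{|I|}\sum_{J\in\mathcal{L},J\subseteq I}b_J\le C$ for every $I\in\mathcal{L}\cup\mathfrak{A}_{-\infty}^{0,\mathrm{fin}}$; $\mathrm{Carl}(b_I)$ is the infimum of such $C$. A locally integrable $g$ is in martingale BMO if $C_1=\sup_{I\in\mathcal{L}}\big[\frac1{|I|}\int_I\sum_{J\in\mathcal{L},J\subseteq I}|\Delta_Jg|^2\big]^{1/2}<\infty$ and $C_2=\sup_{I\in\mathcal{L}}\|\Delta_Ig\|_\infty<\infty$; then $\|g\|_{\mathrm{BMO}}=\max\{C_1,C_2\}$. *)

theory Defs
  imports "HOL-Analysis.Analysis"
begin

text \<open>A lattice is given by its generations L :: int => real set set.\<close>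

definition nondeg_finite_interval :: "real set \<Rightarrow> bool" where
  "nondeg_finite_interval I \<longleftrightarrow> is_interval I \<and> bounded I \<and> interior I \<noteq> {}"

definition lattice :: "(int \<Rightarrow> real set set) \<Rightarrow> bool" where
  "lattice L \<longleftrightarrow>
     (\<forall>k. \<forall>I\<in>L k. nondeg_finite_interval I) \<and>
     (\<forall>k. pairwise disjnt (L k) \<and> \<Union>(L k) = UNIV) \<and>
     (\<forall>k. \<forall>I\<in>L k. \<exists>F. finite F \<and> F \<subseteq> L (k + 1) \<and> \<Union>F = I) \<and>
     (\<forall>I\<in>(\<Union>k. L k). bdd_above {k. I \<in> L k})"

definition lat :: "(int \<Rightarrow> real set set) \<Rightarrow> real set set" where
  "lat L = (\<Union>k. L k)"

definition rk :: "(int \<Rightarrow> real set set) \<Rightarrow> real set \<Rightarrow> int" where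
  "rk L I = (GREATEST k. I \<in> L k)"

definition child :: "(int \<Rightarrow> real set set) \<Rightarrow> real set \<Rightarrow> real set set" where
  "child L I = {J \<in> L (rk L I + 1). J \<subseteq> I}"

definition A_fin :: "(int \<Rightarrow> real set set) \<Rightarrow> real set set" where
  "A_fin L = {S. \<exists>I :: int \<Rightarrow> real set. (\<forall>k. I k \<in> L k \<and> I k \<subseteq> I (k - 1))
                  \<and> S = (\<Union>k. I k) \<and> emeasure lebesgue S < \<infinity>}"

definition carleson_bound :: "(int \<Rightarrow> real set set) \<Rightarrow> (real set \<Rightarrow> real) \<Rightarrow> real \<Rightarrow> bool" where
  "carleson_bound L b C \<longleftrightarrow> C > 0 \<and>
     (\<forall>I \<in> lat L \<union> A_fin L.
        (\<Sum>\<^sub>\<infinity>J\<in>{J\<in>lat L. J \<subseteq> I}. ennreal (b J)) \<le> ennreal (C * measure lebesgue I))"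

definition carleson_seq :: "(int \<Rightarrow> real set set) \<Rightarrow> (real set \<Rightarrow> real) \<Rightarrow> bool" where
  "carleson_seq L b \<longleftrightarrow> (\<forall>I\<in>lat L. b I \<ge> 0) \<and> (\<exists>C. carleson_bound L b C)"

definition Carl :: "(int \<Rightarrow> real set set) \<Rightarrow> (real set \<Rightarrow> real) \<Rightarrow> real" where
  "Carl L b = Inf {C. carleson_bound L b C}"

definition avg :: "real set \<Rightarrow> (real \<Rightarrow> real) \<Rightarrow> real" where
  "avg I f = (LINT x:I|lebesgue. f x) / measure lebesgue I"

definition E :: "real set \<Rightarrow> (real \<Rightarrow> real) \<Rightarrow> real \<Rightarrow> real" where
  "E I f x = avg I f * indicator I x"

definition Delta :: "(int \<Rightarrow> real set set) \<Rightarrow> real set \<Rightarrow> (real \<Rightarrow> real) \<Rightarrow> real \<Rightarrow> real" where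
  "Delta L I f x = - E I f x + (\<Sum>J\<in>child L I. E J f x)"

definition ennsqrt :: "ennreal \<Rightarrow> ennreal" where
  "ennsqrt x = (if x = top then top else ennreal (sqrt (enn2real x)))"

definition Linf_norm :: "(real \<Rightarrow> real) \<Rightarrow> ennreal" where
  "Linf_norm f = Inf {c. AE x in lebesgue. ennreal \<bar>f x\<bar> \<le> c}"

definition BMO_C1 :: "(int \<Rightarrow> real set set) \<Rightarrow> (real \<Rightarrow> real) \<Rightarrow> ennreal" where
  "BMO_C1 L g = (SUP I\<in>lat L. ennsqrt (ennreal (1 / measure lebesgue I) *
       (\<integral>\<^sup>+x\<in>I. (\<Sum>\<^sub>\<infinity>J\<in>{J\<in>lat L. J \<subseteq> I}. ennreal ((Delta L J g x)\<^sup>2)) \<partial>lebesgue)))"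

definition BMO_C2 :: "(int \<Rightarrow> real set set) \<Rightarrow> (real \<Rightarrow> real) \<Rightarrow> ennreal" where
  "BMO_C2 L g = (SUP I\<in>lat L. Linf_norm (Delta L I g))"

definition locally_integrable :: "(real \<Rightarrow> real) \<Rightarrow> bool" where
  "locally_integrable g \<longleftrightarrow> (\<forall>a b. set_integrable lebesgue {a..b} g)"

definition in_mBMO :: "(int \<Rightarrow> real set set) \<Rightarrow> (real \<Rightarrow> real) \<Rightarrow> bool" where
  "in_mBMO L g \<longleftrightarrow> locally_integrable g \<and> BMO_C1 L g < top \<and> BMO_C2 L g < top"

definition BMO_norm :: "(int \<Rightarrow> real set set) \<Rightarrow> (real \<Rightarrow> real) \<Rightarrow> ennreal" where
  "BMO_norm L g = max (BMO_C1 L g) (BMO_C2 L g)"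

definition abs_balayage :: "(int \<Rightarrow> real set set) \<Rightarrow> (real set \<Rightarrow> real) \<Rightarrow> real \<Rightarrow> ennreal" where
  "abs_balayage L a x = (\<Sum>\<^sub>\<infinity>I\<in>lat L. ennreal (\<bar>a I\<bar> / measure lebesgue I * indicator I x))"

definition balayage :: "(int \<Rightarrow> real set set) \<Rightarrow> (real set \<Rightarrow> real) \<Rightarrow> real \<Rightarrow> real" where
  "balayage L a x = (\<Sum>\<^sub>\<infinity>I\<in>lat L. a I / measure lebesgue I * indicator I x)"

definition locally_integrable_nn :: "(real \<Rightarrow> ennreal) \<Rightarrow> bool" where
  "locally_integrable_nn G \<longleftrightarrow> G \<in> borel_measurable lebesgue \<and>
     (\<forall>a b. (\<integral>\<^sup>+x\<in>{a..b}. G x \<partial>lebesgue) < \<infinity>)"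

end

theory Submission
  imports Defs
begin

text \<open>
  Write \<open>c(I)\<close> for the sum of \<open>a\<^sub>J\<close> over the lattice intervals \<open>J \<subseteq> I\<close> and \<open>d(I)\<close> for the
  same sum over \<open>J \<subset> I\<close>; the Carleson condition bounds both by \<open>C|I|\<close>. A lattice interval
  not contained in \<open>J\<close> either contains \<open>J\<close> or misses it, so it contributes equally to the averages
  of \<open>g\<close> over \<open>J\<close> and over any child \<open>K\<close> of \<open>J\<close>. Hence \<open>\<Delta>\<^sub>J g\<close> is the constant
  \<open>c(K)/|K| - d(J)/|J|\<close> on each child \<open>K\<close>, which gives \<open>\<parallel>\<Delta>\<^sub>J g\<parallel>\<^sub>\<infinity> \<le> 2C\<close>.
  Since the \<open>c(K)\<close> add up to \<open>d(J)\<close>, the integral of \<open>(\<Delta>\<^sub>J g)\<^sup>2\<close> equals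
  \<open>\<Sum>\<^sub>K c(K)\<^sup>2/|K| - d(J)\<^sup>2/|J|\<close>, which is at most \<open>\<Sum>\<^sub>K c(K)\<^sup>2/|K| - c(J)\<^sup>2/|J| + 2C|a\<^sub>J|\<close>.
  Summed over all \<open>J \<subseteq> I\<close> generation by generation, the first part telescopes to at most
  \<open>C\<^sup>2|I|\<close> and the second is at most \<open>2C\<^sup>2|I|\<close>, so the mean of the square function over \<open>I\<close>
  is at most \<open>3C\<^sup>2 \<le> (2C)\<^sup>2\<close>.
\<close>

section \<open>Sums over countable sets as series\<close>

text \<open>Enumerating a countable set along the naturals turns sums over it into series, to which
  the convergence theorems for series and for integrals of series apply.\<close>

definition enum_seq :: "'a set \<Rightarrow> ('a \<Rightarrow> 'b::zero) \<Rightarrow> nat \<Rightarrow> 'b" where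
  "enum_seq A f n = (if n \<in> to_nat_on A ` A then f (from_nat_into A n) else 0)"

lemma enum_seq_to_nat_on [simp]: "countable A \<Longrightarrow> i \<in> A \<Longrightarrow> enum_seq A f (to_nat_on A i) = f i"
  by (simp add: enum_seq_def)

lemma enum_seq_outside [simp]: "n \<notin> to_nat_on A ` A \<Longrightarrow> enum_seq A f n = 0"
  by (simp add: enum_seq_def)

lemma enum_seq_comp: "g 0 = 0 \<Longrightarrow> enum_seq A (\<lambda>i. g (f i)) n = g (enum_seq A f n)"
  by (simp add: enum_seq_def)

lemma has_sum_iff_has_sum_enum_seq:
  fixes f :: "'a \<Rightarrow> 'b::{comm_monoid_add, topological_space}"
  assumes "countable A"
  shows "(f has_sum s) A \<longleftrightarrow> (enum_seq A f has_sum s) UNIV"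
proof -
  let ?h = "to_nat_on A" and ?g = "\<lambda>n. f (from_nat_into A n)"
  have "(f has_sum s) A \<longleftrightarrow> ((?g \<circ> ?h) has_sum s) A"
    by (rule has_sum_cong) (simp add: assms)
  also have "\<dots> \<longleftrightarrow> (?g has_sum s) (?h ` A)"
    by (rule has_sum_reindex[symmetric]) (simp add: assms inj_on_to_nat_on)
  also have "\<dots> \<longleftrightarrow> (enum_seq A f has_sum s) UNIV"
    by (rule has_sum_cong_neutral) (auto simp: enum_seq_def)
  finally show ?thesis .
qed

lemma infsum_ennreal_eq_suminf_enum_seq:
  fixes f :: "'a \<Rightarrow> ennreal"
  assumes "countable A"
  shows "(\<Sum>\<^sub>\<infinity>x\<in>A. f x) = (\<Sum>n. enum_seq A f n)"
proof -
  have "(f has_sum infsum f A) A"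
    by (simp add: nonneg_summable_on_complete)
  then have "enum_seq A f sums infsum f A"
    by (simp add: has_sum_iff_has_sum_enum_seq[OF assms] has_sum_imp_sums)
  then show ?thesis by (simp add: sums_iff)
qed

lemma has_sum_enum_seq_if_abs_summable:
  fixes f :: "'a \<Rightarrow> real"
  assumes "countable A" "summable (\<lambda>n. \<bar>enum_seq A f n\<bar>)"
  shows "(f has_sum (\<Sum>n. enum_seq A f n)) A"
proof -
  have "enum_seq A f sums (\<Sum>n. enum_seq A f n)"
    using summable_rabs_cancel[OF assms(2)] by (simp add: summable_sums)
  then have "(enum_seq A f has_sum (\<Sum>n. enum_seq A f n)) UNIV"
    using assms(2) by (intro norm_summable_imp_has_sum) simp_all
  then show ?thesis by (simp add: has_sum_iff_has_sum_enum_seq[OF assms(1)])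
qed

lemma summable_abs_enum_seq_if_infsum_ennreal_finite:
  fixes f :: "'a \<Rightarrow> real"
  assumes "countable A" "(\<Sum>\<^sub>\<infinity>x\<in>A. ennreal \<bar>f x\<bar>) < \<infinity>"
  shows "summable (\<lambda>n. \<bar>enum_seq A f n\<bar>)"
proof -
  have "(\<Sum>n. ennreal \<bar>enum_seq A f n\<bar>) = (\<Sum>\<^sub>\<infinity>x\<in>A. ennreal \<bar>f x\<bar>)"
    by (simp add: infsum_ennreal_eq_suminf_enum_seq[OF assms(1)] enum_seq_comp[where g="\<lambda>y. ennreal \<bar>y\<bar>"])
  then show ?thesis
    using assms(2) by (intro summable_suminf_not_top) auto
qed

lemma ennreal_infsum:
  fixes f :: "'a \<Rightarrow> real"
  assumes "f summable_on A" "\<And>x. x \<in> A \<Longrightarrow> 0 \<le> f x"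
  shows "ennreal (\<Sum>\<^sub>\<infinity>x\<in>A. f x) = (\<Sum>\<^sub>\<infinity>x\<in>A. ennreal (f x))"
proof -
  have "(\<Sum>\<^sub>\<infinity>x\<in>A. ennreal (f x)) = (SUP F\<in>{F. finite F \<and> F \<subseteq> A}. (\<Sum>x\<in>F. ennreal (f x)))"
    by (rule nonneg_infsum_complete) simp
  also have "\<dots> = (SUP F\<in>{F. finite F \<and> F \<subseteq> A}. ennreal (\<Sum>x\<in>F. f x))"
    using assms(2) by (intro SUP_cong refl sum_ennreal) auto
  finally show ?thesis using infsum_nonneg_is_SUPREMUM_ennreal[OF assms] by simp
qed

lemma summable_on_iff_infsum_ennreal_abs_finite:
  fixes f :: "'a \<Rightarrow> real"
  assumes "countable A"
  shows "f summable_on A \<longleftrightarrow> (\<Sum>\<^sub>\<infinity>x\<in>A. ennreal \<bar>f x\<bar>) < \<infinity>"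
proof
  assume "f summable_on A"
  then have "(\<lambda>x. \<bar>f x\<bar>) summable_on A"
    using summable_on_iff_abs_summable_on_real by auto
  then show "(\<Sum>\<^sub>\<infinity>x\<in>A. ennreal \<bar>f x\<bar>) < \<infinity>"
    by (simp flip: ennreal_infsum)
next
  assume "(\<Sum>\<^sub>\<infinity>x\<in>A. ennreal \<bar>f x\<bar>) < \<infinity>"
  then have "(f has_sum (\<Sum>n. enum_seq A f n)) A"
    by (intro has_sum_enum_seq_if_abs_summable summable_abs_enum_seq_if_infsum_ennreal_finite assms)
  then show "f summable_on A" by (auto simp: summable_on_def)
qed

lemma has_sum_diff:
  fixes f g :: "'a \<Rightarrow> real"
  shows "(f has_sum s) A \<Longrightarrow> (g has_sum t) A \<Longrightarrow> ((\<lambda>x. f x - g x) has_sum (s - t)) A"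
  using has_sum_add[OF _ has_sum_uminusI] by fastforce

lemma has_sum_extend_by_zero:
  fixes f :: "'a \<Rightarrow> 'b::{comm_monoid_add, topological_space}"
  assumes "(f has_sum s) B" "B \<subseteq> T"
  shows "((\<lambda>x. if x \<in> B then f x else 0) has_sum s) T"
proof -
  have "((\<lambda>x. if x \<in> B then f x else 0) has_sum s) T \<longleftrightarrow> (f has_sum s) B"
    using assms(2) by (intro has_sum_cong_neutral) auto
  then show ?thesis using assms(1) by simp
qed

lemma nn_integral_infsum:
  fixes f :: "'i \<Rightarrow> 'a \<Rightarrow> ennreal"
  assumes A: "countable A" and meas: "\<And>i. i \<in> A \<Longrightarrow> f i \<in> borel_measurable M"
  shows "(\<integral>\<^sup>+x. (\<Sum>\<^sub>\<infinity>i\<in>A. f i x) \<partial>M) = (\<Sum>\<^sub>\<infinity>i\<in>A. \<integral>\<^sup>+x. f i x \<partial>M)"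
proof -
  have enum_meas: "(\<lambda>x. enum_seq A (\<lambda>i. f i x) n) \<in> borel_measurable M" for n
    by (cases "n \<in> to_nat_on A ` A") (auto simp: A meas)
  have enum_integral:
    "(\<integral>\<^sup>+x. enum_seq A (\<lambda>i. f i x) n \<partial>M) = enum_seq A (\<lambda>i. \<integral>\<^sup>+x. f i x \<partial>M) n" for n
    by (cases "n \<in> to_nat_on A ` A") (auto simp: A)
  have "(\<integral>\<^sup>+x. (\<Sum>\<^sub>\<infinity>i\<in>A. f i x) \<partial>M) = (\<integral>\<^sup>+x. (\<Sum>n. enum_seq A (\<lambda>i. f i x) n) \<partial>M)"
    by (simp add: infsum_ennreal_eq_suminf_enum_seq[OF A])
  also have "\<dots> = (\<Sum>n. \<integral>\<^sup>+x. enum_seq A (\<lambda>i. f i x) n \<partial>M)"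
    by (rule nn_integral_suminf[OF enum_meas])
  also have "\<dots> = (\<Sum>\<^sub>\<infinity>i\<in>A. \<integral>\<^sup>+x. f i x \<partial>M)"
    by (simp add: enum_integral infsum_ennreal_eq_suminf_enum_seq[OF A])
  finally show ?thesis .
qed

section \<open>Lattices of intervals\<close>

lemma sum_indicator_mult_disjoint:
  fixes f :: "'a set \<Rightarrow> 'b::semiring_1"
  assumes "finite F" "pairwise disjnt F" "K \<in> F" "x \<in> K"
  shows "(\<Sum>K'\<in>F. indicator K' x * f K') = f K"
proof -
  have "x \<notin> K'" if "K' \<in> F - {K}" for K'
    using assms(2-4) that unfolding pairwise_def disjnt_def by blast
  then have "(\<Sum>K'\<in>F - {K}. indicator K' x * f K') = 0"
    by (intro sum.neutral) simp
  then show ?thesis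
    using assms(4) by (simp add: sum.remove[OF assms(1,3)])
qed

lemma abs_sum_indicator_mult_disjoint_le:
  fixes f :: "'a set \<Rightarrow> real"
  assumes "finite F" "pairwise disjnt F" "\<And>K. K \<in> F \<Longrightarrow> \<bar>f K\<bar> \<le> M" "0 \<le> M"
  shows "\<bar>\<Sum>K\<in>F. indicator K x * f K\<bar> \<le> M"
proof (cases "\<exists>K\<in>F. x \<in> K")
  case True
  then obtain K where K: "K \<in> F" "x \<in> K" by blast
  then show ?thesis using sum_indicator_mult_disjoint[OF assms(1,2) K, of f] assms(3) by simp
qed (use assms(4) in auto)

lemma power2_sum_indicator_mult_disjoint:
  fixes f :: "'a set \<Rightarrow> real"
  assumes "finite F" "pairwise disjnt F"
  shows "(\<Sum>K\<in>F. indicator K x * f K)\<^sup>2 = (\<Sum>K\<in>F. indicator K x * (f K)\<^sup>2)"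
proof (cases "\<exists>K\<in>F. x \<in> K")
  case True
  then obtain K where K: "K \<in> F" "x \<in> K" by blast
  show ?thesis using sum_indicator_mult_disjoint[OF assms K, of f]
      sum_indicator_mult_disjoint[OF assms K, of "\<lambda>K. (f K)\<^sup>2"] by simp
qed auto

lemma in_lat_iff [simp]: "I \<in> lat L \<longleftrightarrow> (\<exists>k. I \<in> L k)"
  unfolding lat_def by simp

definition subintervals :: "(int \<Rightarrow> real set set) \<Rightarrow> real set \<Rightarrow> real set set" where
  "subintervals L I = {J \<in> lat L. J \<subseteq> I}"

definition strict_subintervals :: "(int \<Rightarrow> real set set) \<Rightarrow> real set \<Rightarrow> real set set" where
  "strict_subintervals L I = {J \<in> lat L. J \<subseteq> I \<and> J \<noteq> I}"

lemma strict_subintervals_subset: "strict_subintervals L I \<subseteq> subintervals L I"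
  unfolding subintervals_def strict_subintervals_def by blast

locale interval_lattice =
  fixes L :: "int \<Rightarrow> real set set"
  assumes is_lattice: "lattice L"
begin

lemma gen_nondeg: "I \<in> L k \<Longrightarrow> nondeg_finite_interval I"
  and gen_pairwise_disjnt: "pairwise disjnt (L k)"
  and gen_covers: "\<Union>(L k) = UNIV"
  and gen_refinement: "I \<in> L k \<Longrightarrow> \<exists>F. finite F \<and> F \<subseteq> L (k + 1) \<and> \<Union>F = I"
  using is_lattice unfolding lattice_def by blast+

lemma gen_bdd_above: "I \<in> L k \<Longrightarrow> bdd_above {k. I \<in> L k}"
  using is_lattice unfolding lattice_def by (meson UNIV_I UN_I)

lemma gen_nonempty: "I \<in> L k \<Longrightarrow> I \<noteq> {}"
  using gen_nondeg unfolding nondeg_finite_interval_def by force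

lemma gen_eq_if_not_disjoint: "I \<in> L k \<Longrightarrow> J \<in> L k \<Longrightarrow> I \<inter> J \<noteq> {} \<Longrightarrow> I = J"
  using gen_pairwise_disjnt[of k] unfolding pairwise_def disjnt_def by blast

lemma gen_parent: "I \<in> L (k + 1) \<Longrightarrow> \<exists>I'\<in>L k. I \<subseteq> I'"
proof -
  assume I: "I \<in> L (k + 1)"
  then obtain x where x: "x \<in> I" using gen_nonempty by blast
  obtain I' where I': "I' \<in> L k" "x \<in> I'" using gen_covers[of k] by blast
  obtain F where F: "F \<subseteq> L (k + 1)" "\<Union>F = I'" using gen_refinement[OF I'(1)] by blast
  then obtain K where K: "K \<in> F" "x \<in> K" using I'(2) by blast
  have "K = I" using gen_eq_if_not_disjoint[of K "k + 1" I] K F(1) I x by blast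
  then show ?thesis using I'(1) K(1) F(2) by blast
qed

lemma gen_ancestor: "n \<le> m \<Longrightarrow> I \<in> L m \<Longrightarrow> \<exists>I'\<in>L n. I \<subseteq> I'"
proof (induction m arbitrary: I rule: int_ge_induct)
  case (step m)
  then show ?case using gen_parent[OF step.prems] by (meson order_trans)
qed blast

lemma gen_subset_or_disjoint: "m \<le> n \<Longrightarrow> I \<in> L m \<Longrightarrow> J \<in> L n \<Longrightarrow> J \<subseteq> I \<or> I \<inter> J = {}"
proof -
  assume asm: "m \<le> n" "I \<in> L m" "J \<in> L n"
  then obtain I' where "I' \<in> L m" "J \<subseteq> I'" using gen_ancestor by blast
  then show ?thesis using gen_eq_if_not_disjoint[OF asm(2)] by blast
qed

lemma gen_between: "m \<le> k \<Longrightarrow> k \<le> n \<Longrightarrow> I \<in> L m \<Longrightarrow> I \<in> L n \<Longrightarrow> I \<in> L k"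
proof -
  assume asm: "m \<le> k" "k \<le> n" "I \<in> L m" "I \<in> L n"
  obtain I' where I': "I' \<in> L k" "I \<subseteq> I'" using gen_ancestor[OF asm(2,4)] by blast
  obtain I'' where I'': "I'' \<in> L m" "I' \<subseteq> I''" using gen_ancestor[OF asm(1) I'(1)] by blast
  have "I'' \<inter> I \<noteq> {}" using I' I'' gen_nonempty[OF asm(3)] by blast
  then have "I'' = I" by (rule gen_eq_if_not_disjoint[OF I''(1) asm(3)])
  then have "I' = I" using I'(2) I''(2) by blast
  then show ?thesis using I'(1) by simp
qed

lemma rk_greatest: assumes "I \<in> L k" shows "I \<in> L (rk L I)" "\<And>k. I \<in> L k \<Longrightarrow> k \<le> rk L I"
proof -
  obtain b where b: "\<And>k. I \<in> L k \<Longrightarrow> k \<le> b"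
    using gen_bdd_above[OF assms] unfolding bdd_above_def by blast
  define P where "P = {k'. I \<in> L k' \<and> k \<le> k'}"
  have "P \<subseteq> {k..b}" unfolding P_def using b by auto
  then have fin: "finite P" by (rule finite_subset) simp
  have "Max P \<in> P" using fin assms unfolding P_def by (intro Max_in) auto
  then have m: "I \<in> L (Max P)" "k \<le> Max P" unfolding P_def by auto
  have greatest: "k' \<le> Max P" if k': "I \<in> L k'" for k'
  proof (cases "k \<le> k'")
    case True
    then show ?thesis using Max_ge[OF fin] k' unfolding P_def by blast
  qed (use m(2) in simp)
  have "rk L I = Max P"
    unfolding rk_def by (rule Greatest_equality[where P="\<lambda>k. I \<in> L k", OF m(1) greatest])
  then show "I \<in> L (rk L I)" "\<And>k. I \<in> L k \<Longrightarrow> k \<le> rk L I" using m(1) greatest by auto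
qed

lemma gen_rank: "I \<in> lat L \<Longrightarrow> I \<in> L (rk L I)"
  using rk_greatest(1) by auto

lemma le_rank: "I \<in> L k \<Longrightarrow> k \<le> rk L I"
  using rk_greatest(2) .

lemma lat_fmeasurable: "I \<in> lat L \<Longrightarrow> I \<in> fmeasurable lebesgue"
  using gen_nondeg unfolding nondeg_finite_interval_def
  by (auto simp: is_interval_convex measurable_convex)

lemma lat_sets: "I \<in> lat L \<Longrightarrow> I \<in> sets lebesgue"
  using lat_fmeasurable by (simp add: fmeasurableD)

lemma lat_emeasure: "I \<in> lat L \<Longrightarrow> emeasure lebesgue I = ennreal (measure lebesgue I)"
  using lat_fmeasurable by (simp add: emeasure_eq_measure2)

lemma lat_measure_pos: "I \<in> lat L \<Longrightarrow> 0 < measure lebesgue I"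
proof -
  assume I: "I \<in> lat L"
  then obtain x where "x \<in> interior I"
    using gen_nondeg unfolding nondeg_finite_interval_def by fastforce
  then obtain e where e: "e > 0" "ball x e \<subseteq> I"
    by (meson open_contains_ball_eq open_interior interior_subset subset_trans)
  have "2 * e = measure lebesgue (ball x e)"
    using e by (simp add: ball_eq_greaterThanLessThan)
  also have "\<dots> \<le> measure lebesgue I"
    using e lat_fmeasurable[OF I] by (intro measure_mono_fmeasurable) auto
  finally show ?thesis using e by simp
qed

lemma lat_nonempty: "I \<in> lat L \<Longrightarrow> I \<noteq> {}"
  using gen_nonempty by auto

lemma lat_bounded: "I \<in> lat L \<Longrightarrow> bounded I"
  using gen_nondeg unfolding nondeg_finite_interval_def by auto

lemma lat_nested_or_disjoint: "I \<in> lat L \<Longrightarrow> J \<in> lat L \<Longrightarrow> I \<subseteq> J \<or> J \<subseteq> I \<or> I \<inter> J = {}"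
  using gen_subset_or_disjoint by (metis in_lat_iff inf_commute linear)

lemma countable_lat: "countable (lat L)"
proof -
  have "countable (L k)" for k
    using gen_pairwise_disjnt gen_nondeg unfolding nondeg_finite_interval_def
    by (intro countable_disjoint_nonempty_interior_subsets) auto
  then show ?thesis unfolding lat_def by auto
qed

lemma countable_subintervals: "countable (subintervals L I)"
  unfolding subintervals_def using countable_lat by (rule countable_subset[rotated]) blast

lemma child_gen: "K \<in> child L J \<Longrightarrow> K \<in> L (rk L J + 1)"
  and child_subset: "K \<in> child L J \<Longrightarrow> K \<subseteq> J"
  unfolding child_def by auto

lemma child_lat: "K \<in> child L J \<Longrightarrow> K \<in> lat L"
  using child_gen by auto

lemma child_pairwise_disjnt: "pairwise disjnt (child L J)"
  using gen_pairwise_disjnt unfolding child_def pairwise_def by auto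

lemma child_eq_if_not_disjoint: "K \<in> child L J \<Longrightarrow> K' \<in> child L J \<Longrightarrow> K \<inter> K' \<noteq> {} \<Longrightarrow> K = K'"
  using child_pairwise_disjnt unfolding pairwise_def disjnt_def by blast

lemma child_neq: "J \<in> lat L \<Longrightarrow> K \<in> child L J \<Longrightarrow> K \<noteq> J"
  using le_rank[OF child_gen] by fastforce

lemma finite_child_and_Union_child:
  assumes "J \<in> lat L" shows "finite (child L J)" "\<Union>(child L J) = J"
proof -
  obtain F where F: "finite F" "F \<subseteq> L (rk L J + 1)" "\<Union>F = J"
    using gen_refinement[OF gen_rank[OF assms]] by blast
  have "child L J \<subseteq> F"
  proof
    fix K assume K: "K \<in> child L J"
    then obtain x where x: "x \<in> K" using gen_nonempty[OF child_gen] by blast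
    then obtain K' where "K' \<in> F" "x \<in> K'" using K F(3) child_subset by blast
    then show "K \<in> F" using gen_eq_if_not_disjoint[OF child_gen[OF K]] F(2) x by blast
  qed
  moreover have "F \<subseteq> child L J" using F unfolding child_def by blast
  ultimately show "finite (child L J)" "\<Union>(child L J) = J" using F by auto
qed

lemmas finite_child = finite_child_and_Union_child(1)
  and Union_child = finite_child_and_Union_child(2)

lemma indicator_eq_sum_child:
  "J \<in> lat L \<Longrightarrow> indicator J x = (\<Sum>K\<in>child L J. indicator K x :: real)"
  using indicator_UN_disjoint[OF finite_child, of J id x] child_pairwise_disjnt
  by (simp add: Union_child disjoint_family_on_def pairwise_def disjnt_def)

lemma sum_measure_child:
  assumes "J \<in> lat L" shows "(\<Sum>K\<in>child L J. measure lebesgue K) = measure lebesgue J"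
  using measure_Union'[OF finite_child[OF assms] lat_fmeasurable[OF child_lat] child_pairwise_disjnt]
  by (simp add: Union_child[OF assms])

lemma child_containing:
  assumes J: "J \<in> lat L" and I: "I \<in> lat L" "I \<subseteq> J" "I \<noteq> J"
  shows "\<exists>K\<in>child L J. I \<subseteq> K"
proof -
  let ?r = "rk L J" and ?m = "rk L I"
  have "\<not> ?m \<le> ?r"
    using gen_subset_or_disjoint[OF _ gen_rank[OF I(1)] gen_rank[OF J]] I lat_nonempty[OF I(1)] by blast
  then obtain K where K: "K \<in> L (?r + 1)" "I \<subseteq> K"
    using gen_ancestor[of "?r + 1" ?m I] gen_rank[OF I(1)] by auto
  have "K \<subseteq> J"
    using gen_subset_or_disjoint[of ?r "?r + 1" J K] gen_rank[OF J] K I lat_nonempty[OF I(1)] by auto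
  then show ?thesis using K unfolding child_def by blast
qed

lemma lat_cases_child:
  assumes J: "J \<in> lat L" and K: "K \<in> child L J" and I: "I \<in> lat L"
  obtains "I \<inter> J = {}" | "J \<subseteq> I" | "I \<subseteq> K" | "I \<subseteq> J" "I \<noteq> J" "I \<inter> K = {}"
proof -
  consider "I \<inter> J = {}" | "J \<subseteq> I" | "I \<subseteq> J" "I \<noteq> J"
    using lat_nested_or_disjoint[OF I J] by blast
  then show thesis
  proof cases
    case 3
    then obtain K' where "K' \<in> child L J" "I \<subseteq> K'" using child_containing[OF J I] by blast
    then show thesis using that child_eq_if_not_disjoint[OF K] 3 by (cases "K' = K") blast+
  qed (use that in blast)+
qed

lemma Union_subintervals_child:
  assumes J: "J \<in> lat L" shows "(\<Union>K\<in>child L J. subintervals L K) = strict_subintervals L J"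
proof
  show "(\<Union>K\<in>child L J. subintervals L K) \<subseteq> strict_subintervals L J"
  proof
    fix I assume "I \<in> (\<Union>K\<in>child L J. subintervals L K)"
    then obtain K where K: "K \<in> child L J" "I \<in> lat L" "I \<subseteq> K"
      unfolding subintervals_def by blast
    have "I \<noteq> J" using K child_subset[OF K(1)] child_neq[OF J K(1)] by blast
    then show "I \<in> strict_subintervals L J"
      using K child_subset[OF K(1)] unfolding strict_subintervals_def by blast
  qed
  show "strict_subintervals L J \<subseteq> (\<Union>K\<in>child L J. subintervals L K)"
    using child_containing[OF J] unfolding subintervals_def strict_subintervals_def by blast
qed

lemma subintervals_child_disjoint:
  assumes "K \<in> child L J" "K' \<in> child L J" "K \<noteq> K'"
  shows "subintervals L K \<inter> subintervals L K' = {}"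
proof -
  have "K \<inter> K' = {}" using child_eq_if_not_disjoint[OF assms(1,2)] assms(3) by blast
  then show ?thesis using lat_nonempty unfolding subintervals_def by blast
qed

definition next_gen :: "int \<Rightarrow> real set \<Rightarrow> real set set" where
  "next_gen n J = {K \<in> L (n + 1). K \<subseteq> J}"

lemma next_gen_eq:
  assumes J: "J \<in> L n"
  shows "next_gen n J = (if rk L J = n then child L J else {J})"
proof (cases "rk L J = n")
  case False
  then have "n + 1 \<le> rk L J" using le_rank[OF J] by simp
  then have J': "J \<in> L (n + 1)" using gen_between[OF _ _ J rk_greatest(1)[OF J], of "n + 1"] by simp
  have "next_gen n J = {J}"
  proof
    show "next_gen n J \<subseteq> {J}"
    proof
      fix K assume "K \<in> next_gen n J"
      then have K: "K \<in> L (n + 1)" "K \<subseteq> J" unfolding next_gen_def by auto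
      then have "K \<inter> J \<noteq> {}" using gen_nonempty[OF K(1)] by blast
      then show "K \<in> {J}" using gen_eq_if_not_disjoint[OF K(1) J'] by simp
    qed
    show "{J} \<subseteq> next_gen n J" using J' unfolding next_gen_def by simp
  qed
  then show ?thesis using False by simp
qed (simp add: next_gen_def child_def)

lemma finite_next_gen: assumes J: "J \<in> L n" shows "finite (next_gen n J)"
proof -
  have "J \<in> lat L" using J by auto
  then show ?thesis using finite_child by (simp add: next_gen_eq[OF J])
qed

lemma next_gen_disjoint:
  assumes "J \<in> L n" "J' \<in> L n" "J \<noteq> J'" shows "next_gen n J \<inter> next_gen n J' = {}"
proof -
  have "J \<inter> J' = {}" using gen_eq_if_not_disjoint[OF assms(1,2)] assms(3) by blast
  then show ?thesis using gen_nonempty unfolding next_gen_def by blast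
qed

end

section \<open>Balayage\<close>

locale balayage_data = interval_lattice +
  fixes a :: "real set \<Rightarrow> real"
  assumes abs_balayage_finite_AE: "AE x in lebesgue. abs_balayage L a x < \<infinity>"
    and abs_balayage_locally_integrable: "locally_integrable_nn (abs_balayage L a)"
begin

definition bump :: "real set \<Rightarrow> real \<Rightarrow> real" where
  "bump I x = a I / measure lebesgue I * indicator I x"

definition bump_mass :: "real set \<Rightarrow> real set \<Rightarrow> real" where
  "bump_mass A I = a I * measure lebesgue (I \<inter> A) / measure lebesgue I"

lemma abs_balayage_eq: "abs_balayage L a x = (\<Sum>\<^sub>\<infinity>I\<in>lat L. ennreal \<bar>bump I x\<bar>)"
  unfolding abs_balayage_def bump_def
  using lat_measure_pos by (intro infsum_cong) (simp add: abs_mult indicator_def)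

lemma abs_balayage_measurable [measurable]: "abs_balayage L a \<in> borel_measurable lebesgue"
  using abs_balayage_locally_integrable unfolding locally_integrable_nn_def by blast

lemma bump_measurable [measurable]: "I \<in> lat L \<Longrightarrow> bump I \<in> borel_measurable lebesgue"
  unfolding bump_def using lat_sets by simp

lemma summable_abs_enum_seq_bump:
  "abs_balayage L a x < \<infinity> \<Longrightarrow> summable (\<lambda>n. \<bar>enum_seq (lat L) (\<lambda>I. bump I x) n\<bar>)"
  by (intro summable_abs_enum_seq_if_infsum_ennreal_finite countable_lat) (simp add: abs_balayage_eq)

lemma balayage_eq_suminf:
  "abs_balayage L a x < \<infinity> \<Longrightarrow> balayage L a x = (\<Sum>n. enum_seq (lat L) (\<lambda>I. bump I x) n)"
  unfolding balayage_def bump_def[symmetric]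
  by (intro infsumI has_sum_enum_seq_if_abs_summable countable_lat summable_abs_enum_seq_bump)

lemma balayage_eq_0: "\<not> abs_balayage L a x < \<infinity> \<Longrightarrow> balayage L a x = 0"
  unfolding balayage_def bump_def[symmetric]
  by (simp add: infsum_not_exists summable_on_iff_infsum_ennreal_abs_finite[OF countable_lat]
      abs_balayage_eq)

lemma balayage_measurable [measurable]: "balayage L a \<in> borel_measurable lebesgue"
proof -
  have enum_measurable: "(\<lambda>x. enum_seq (lat L) (\<lambda>I. bump I x) n) \<in> borel_measurable lebesgue" for n
    by (cases "n \<in> to_nat_on (lat L) ` lat L") (auto simp: countable_lat)
  have "balayage L a = (\<lambda>x. if abs_balayage L a x < \<infinity> then \<Sum>n. enum_seq (lat L) (\<lambda>I. bump I x) n else 0)"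
    using balayage_eq_suminf balayage_eq_0 by auto
  also have "\<dots> \<in> borel_measurable lebesgue"
    using enum_measurable by measurable
  finally show ?thesis .
qed

lemma set_nn_integral_abs_balayage_finite:
  assumes "bounded A" shows "(\<integral>\<^sup>+x\<in>A. abs_balayage L a x \<partial>lebesgue) < \<infinity>"
proof -
  obtain r where "A \<subseteq> cbox (-r) r" using bounded_subset_cbox_symmetric[OF assms] by blast
  then have "(\<integral>\<^sup>+x\<in>A. abs_balayage L a x \<partial>lebesgue) \<le> (\<integral>\<^sup>+x\<in>{-r..r}. abs_balayage L a x \<partial>lebesgue)"
    by (intro nn_integral_mono) (auto simp: indicator_def)
  also have "\<dots> < \<infinity>"
    using abs_balayage_locally_integrable unfolding locally_integrable_nn_def by blast
  finally show ?thesis .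
qed

lemma set_integral_bump:
  assumes I: "I \<in> lat L" and A: "A \<in> sets lebesgue"
  shows "integrable lebesgue (\<lambda>x. indicator A x * bump I x)"
    and "(\<integral>x. indicator A x * bump I x \<partial>lebesgue) = bump_mass A I"
    and "(\<integral>x. \<bar>indicator A x * bump I x\<bar> \<partial>lebesgue) = \<bar>bump_mass A I\<bar>"
    and "(\<integral>\<^sup>+x. ennreal \<bar>indicator A x * bump I x\<bar> \<partial>lebesgue) = ennreal \<bar>bump_mass A I\<bar>"
proof -
  have bump_restrict: "indicator A x * bump I x = a I / measure lebesgue I * indicator (I \<inter> A) x" for x
    unfolding bump_def indicator_def by auto
  have IA: "I \<inter> A \<in> fmeasurable lebesgue"
    using lat_fmeasurable[OF I] A by (auto intro: fmeasurableI2)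
  then have "integrable lebesgue (indicator (I \<inter> A) :: real \<Rightarrow> real)"
    unfolding fmeasurable_def by (intro integrable_real_indicator) auto
  then show "integrable lebesgue (\<lambda>x. indicator A x * bump I x)"
    and "(\<integral>x. indicator A x * bump I x \<partial>lebesgue) = bump_mass A I"
    unfolding bump_restrict bump_mass_def by simp_all
  then show "(\<integral>x. \<bar>indicator A x * bump I x\<bar> \<partial>lebesgue) = \<bar>bump_mass A I\<bar>"
    unfolding bump_restrict bump_mass_def using lat_measure_pos[OF I] by (simp add: abs_mult)
  have "(\<integral>\<^sup>+x. ennreal \<bar>indicator A x * bump I x\<bar> \<partial>lebesgue)
      = (\<integral>\<^sup>+x. ennreal (\<bar>a I\<bar> / measure lebesgue I) * indicator (I \<inter> A) x \<partial>lebesgue)"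
    unfolding bump_restrict using lat_measure_pos[OF I]
    by (intro nn_integral_cong) (simp add: abs_mult indicator_def)
  also have "\<dots> = ennreal (\<bar>a I\<bar> / measure lebesgue I) * ennreal (measure lebesgue (I \<inter> A))"
    using IA by (simp add: nn_integral_cmult_indicator emeasure_eq_measure2 fmeasurableD)
  also have "\<dots> = ennreal \<bar>bump_mass A I\<bar>"
    unfolding bump_mass_def using lat_measure_pos[OF I] by (simp add: ennreal_mult'[symmetric] abs_mult)
  finally show "(\<integral>\<^sup>+x. ennreal \<bar>indicator A x * bump I x\<bar> \<partial>lebesgue) = ennreal \<bar>bump_mass A I\<bar>" .
qed

lemma infsum_abs_bump_mass_finite:
  assumes A: "A \<in> sets lebesgue" "bounded A"
  shows "(\<Sum>\<^sub>\<infinity>I\<in>lat L. ennreal \<bar>bump_mass A I\<bar>) < \<infinity>"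
proof -
  have "(\<Sum>\<^sub>\<infinity>I\<in>lat L. ennreal \<bar>bump_mass A I\<bar>)
      = (\<Sum>\<^sub>\<infinity>I\<in>lat L. \<integral>\<^sup>+x. ennreal \<bar>indicator A x * bump I x\<bar> \<partial>lebesgue)"
    using set_integral_bump(4)[OF _ A(1)] by (intro infsum_cong) simp
  also have "\<dots> = (\<integral>\<^sup>+x. (\<Sum>\<^sub>\<infinity>I\<in>lat L. ennreal \<bar>indicator A x * bump I x\<bar>) \<partial>lebesgue)"
    using A(1) by (intro nn_integral_infsum[symmetric] countable_lat) simp
  also have "\<dots> = (\<integral>\<^sup>+x\<in>A. abs_balayage L a x \<partial>lebesgue)"
    by (intro nn_integral_cong) (simp add: abs_balayage_eq indicator_def)
  also have "\<dots> < \<infinity>"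
    using set_nn_integral_abs_balayage_finite[OF A(2)] .
  finally show ?thesis .
qed

lemma has_sum_set_integral_balayage:
  assumes A: "A \<in> sets lebesgue" "bounded A"
  shows "set_integrable lebesgue A (balayage L a)"
    and "(bump_mass A has_sum (LINT x:A|lebesgue. balayage L a x)) (lat L)"
proof -
  let ?S = "lat L"
  note [measurable] = A(1)
  define h where "h = (\<lambda>n x. indicator A x * enum_seq ?S (\<lambda>I. bump I x) n)"
  have h_props: "integrable lebesgue (h n) \<and> integral\<^sup>L lebesgue (h n) = enum_seq ?S (bump_mass A) n \<and>
      (\<integral>x. norm (h n x) \<partial>lebesgue) = \<bar>enum_seq ?S (bump_mass A) n\<bar>" for n
    by (cases "n \<in> to_nat_on ?S ` ?S") (auto simp: h_def countable_lat set_integral_bump[OF _ A(1)])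
  have summable_mass: "summable (\<lambda>n. \<bar>enum_seq ?S (bump_mass A) n\<bar>)"
    using infsum_abs_bump_mass_finite[OF A]
    by (intro summable_abs_enum_seq_if_infsum_ennreal_finite countable_lat)
  have "AE x in lebesgue. summable (\<lambda>n. norm (h n x)) \<and> (\<Sum>n. h n x) = indicator A x * balayage L a x"
    using abs_balayage_finite_AE
  proof eventually_elim
    case (elim x)
    then show ?case
      using summable_abs_enum_seq_bump[OF elim] balayage_eq_suminf[OF elim] summable_rabs_cancel
      by (auto simp: h_def abs_mult intro: summable_mult suminf_mult)
  qed
  then have AE_summable: "AE x in lebesgue. summable (\<lambda>n. norm (h n x))"
    and AE_sum: "AE x in lebesgue. (\<Sum>n. h n x) = indicator A x *\<^sub>R balayage L a x"
    by (auto elim: eventually_mono)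
  have summable_norm: "summable (\<lambda>n. \<integral>x. norm (h n x) \<partial>lebesgue)"
    using summable_mass h_props by simp
  note h_integrable = h_props[THEN conjunct1]
  have sum_integrable: "integrable lebesgue (\<lambda>x. \<Sum>n. h n x)"
    by (rule integrable_suminf[OF h_integrable AE_summable summable_norm])
  show "set_integrable lebesgue A (balayage L a)"
    unfolding set_integrable_def
    by (intro integrable_cong_AE_imp[OF sum_integrable _ AE_sum]) measurable
  have "(LINT x:A|lebesgue. balayage L a x) = (\<integral>x. (\<Sum>n. h n x) \<partial>lebesgue)"
    unfolding set_lebesgue_integral_def using AE_sum sum_integrable
    by (intro integral_cong_AE) (auto elim: eventually_mono)
  also have "\<dots> = (\<Sum>n. enum_seq ?S (bump_mass A) n)"
    using integral_suminf[OF h_integrable AE_summable summable_norm] h_props by simp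
  finally show "(bump_mass A has_sum (LINT x:A|lebesgue. balayage L a x)) ?S"
    using has_sum_enum_seq_if_abs_summable[OF countable_lat summable_mass] by simp
qed

lemma bump_mass_of_subset: "I \<in> lat L \<Longrightarrow> I \<subseteq> A \<Longrightarrow> bump_mass A I = a I"
  unfolding bump_mass_def by (metis Int_absorb2 lat_measure_pos less_irrefl nonzero_mult_div_cancel_right)

lemma bump_mass_of_superset: "A \<subseteq> I \<Longrightarrow> bump_mass A I = a I * measure lebesgue A / measure lebesgue I"
  unfolding bump_mass_def by (simp add: Int_absorb1)

lemma bump_mass_of_disjoint: "I \<inter> A = {} \<Longrightarrow> bump_mass A I = 0"
  unfolding bump_mass_def by simp

lemma has_sum_avg_balayage:
  assumes "I \<in> lat L"
  shows "((\<lambda>J. bump_mass I J / measure lebesgue I) has_sum avg I (balayage L a)) (lat L)"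
  unfolding avg_def using assms lat_sets lat_bounded
  by (intro has_sum_divide_const has_sum_set_integral_balayage(2))

end

section \<open>Martingale differences of a balayage\<close>

lemma ennsqrt_le_ennreal: "0 \<le> c \<Longrightarrow> y \<le> ennreal (c\<^sup>2) \<Longrightarrow> ennsqrt y \<le> ennreal c"
proof -
  assume c: "0 \<le> c" and y: "y \<le> ennreal (c\<^sup>2)"
  then obtain q where q: "0 \<le> q" "y = ennreal q" "q \<le> c\<^sup>2"
    using le_ennreal_iff[of "c\<^sup>2" y] by auto
  then have "sqrt q \<le> c" using c real_le_lsqrt by blast
  then show ?thesis unfolding ennsqrt_def using q by (simp add: ennreal_leI)
qed

lemma ennreal_le_mult_Inf:
  fixes S :: "real set"
  assumes "S \<noteq> {}" "0 < k" "\<And>C. C \<in> S \<Longrightarrow> 0 < C" "\<And>C. C \<in> S \<Longrightarrow> x \<le> ennreal (k * C)"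
  shows "x \<le> ennreal (k * Inf S)"
proof -
  obtain C0 where C0: "C0 \<in> S" using assms(1) by blast
  have "x < \<infinity>" using assms(4)[OF C0] by (simp add: le_less_trans)
  then obtain b where b: "x = ennreal b" "0 \<le> b"
    by (cases x rule: ennreal_cases) auto
  have "b / k \<le> Inf S"
  proof (rule cInf_greatest[OF assms(1)])
    fix C assume C: "C \<in> S"
    then have "b \<le> k * C" using assms(2) assms(3,4)[OF C] b by (simp add: ennreal_le_iff)
    then show "b / k \<le> C" using assms(2) by (simp add: divide_le_eq mult.commute)
  qed
  then show ?thesis using b assms(2) by (simp add: ennreal_leI divide_le_eq mult.commute)
qed

locale carleson_balayage = balayage_data +
  fixes C :: real
  assumes carleson: "carleson_bound L (\<lambda>I. \<bar>a I\<bar>) C"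
begin

definition sub_sum :: "real set \<Rightarrow> real" where
  "sub_sum I = (\<Sum>\<^sub>\<infinity>J\<in>subintervals L I. a J)"

definition strict_sub_sum :: "real set \<Rightarrow> real" where
  "strict_sub_sum I = (\<Sum>\<^sub>\<infinity>J\<in>strict_subintervals L I. a J)"

lemma carleson_pos: "0 < C"
  using carleson unfolding carleson_bound_def by blast

lemma summable_on_and_infsum_abs_le:
  assumes I: "I \<in> lat L" and B: "B \<subseteq> subintervals L I"
  shows "a summable_on B" "(\<Sum>\<^sub>\<infinity>J\<in>B. \<bar>a J\<bar>) \<le> C * measure lebesgue I"
proof -
  have bound: "(\<Sum>\<^sub>\<infinity>J\<in>subintervals L I. ennreal \<bar>a J\<bar>) \<le> ennreal (C * measure lebesgue I)"
    using carleson I unfolding carleson_bound_def subintervals_def by simp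
  have "(\<Sum>\<^sub>\<infinity>J\<in>subintervals L I. ennreal \<bar>a J\<bar>) < \<infinity>"
    by (rule le_less_trans[OF bound]) simp
  then have "a summable_on subintervals L I"
    by (simp add: summable_on_iff_infsum_ennreal_abs_finite[OF countable_subintervals])
  then have abs_summable: "(\<lambda>J. \<bar>a J\<bar>) summable_on subintervals L I"
    using summable_on_iff_abs_summable_on_real by auto
  then have "(\<lambda>J. \<bar>a J\<bar>) summable_on B"
    using B by (rule summable_on_subset_banach)
  then show "a summable_on B"
    using summable_on_iff_abs_summable_on_real by auto
  have "(\<Sum>\<^sub>\<infinity>J\<in>B. \<bar>a J\<bar>) \<le> (\<Sum>\<^sub>\<infinity>J\<in>subintervals L I. \<bar>a J\<bar>)"
    using \<open>(\<lambda>J. \<bar>a J\<bar>) summable_on B\<close> abs_summable B by (rule infsum_mono2) simp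
  also have "\<dots> \<le> C * measure lebesgue I"
  proof -
    have "ennreal (\<Sum>\<^sub>\<infinity>J\<in>subintervals L I. \<bar>a J\<bar>) \<le> ennreal (C * measure lebesgue I)"
      using bound ennreal_infsum[OF abs_summable] by simp
    then show ?thesis
      using carleson_pos lat_measure_pos[OF I] by (simp add: ennreal_le_iff)
  qed
  finally show "(\<Sum>\<^sub>\<infinity>J\<in>B. \<bar>a J\<bar>) \<le> C * measure lebesgue I" .
qed

lemma abs_infsum_subintervals_le:
  assumes "I \<in> lat L" "B \<subseteq> subintervals L I"
  shows "\<bar>\<Sum>\<^sub>\<infinity>J\<in>B. a J\<bar> \<le> C * measure lebesgue I"
  using norm_infsum_bound[of a B] summable_on_and_infsum_abs_le[OF assms]
    summable_on_iff_abs_summable_on_real[of a B] by simp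

lemma abs_sub_sum_le: "I \<in> lat L \<Longrightarrow> \<bar>sub_sum I\<bar> \<le> C * measure lebesgue I"
  unfolding sub_sum_def using abs_infsum_subintervals_le by blast

lemma abs_strict_sub_sum_le: "I \<in> lat L \<Longrightarrow> \<bar>strict_sub_sum I\<bar> \<le> C * measure lebesgue I"
  unfolding strict_sub_sum_def using abs_infsum_subintervals_le strict_subintervals_subset by blast

lemma sub_sum_eq: "J \<in> lat L \<Longrightarrow> sub_sum J = a J + strict_sub_sum J"
proof -
  assume J: "J \<in> lat L"
  then have "subintervals L J = insert J (strict_subintervals L J)" "J \<notin> strict_subintervals L J"
    unfolding subintervals_def strict_subintervals_def by auto
  then show ?thesis unfolding sub_sum_def strict_sub_sum_def
    using infsum_insert[OF summable_on_and_infsum_abs_le(1)[OF J strict_subintervals_subset]] by simp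
qed

lemma sum_sub_sum_child: "J \<in> lat L \<Longrightarrow> (\<Sum>K\<in>child L J. sub_sum K) = strict_sub_sum J"
  unfolding sub_sum_def strict_sub_sum_def Union_subintervals_child[symmetric]
  using summable_on_and_infsum_abs_le(1)[OF child_lat order_refl]
  by (intro sum_infsum finite_child subintervals_child_disjoint) auto

lemma bump_mass_child_diff:
  assumes J: "J \<in> lat L" and K: "K \<in> child L J" and I: "I \<in> lat L"
  shows "bump_mass K I / measure lebesgue K - bump_mass J I / measure lebesgue J
    = (if I \<in> subintervals L K then a I / measure lebesgue K else 0)
      - (if I \<in> strict_subintervals L J then a I / measure lebesgue J else 0)"
proof -
  have KJ: "K \<subseteq> J" "K \<noteq> J" using child_subset[OF K] child_neq[OF J K] by auto
  have pos: "0 < measure lebesgue K" "0 < measure lebesgue J"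
    using lat_measure_pos child_lat[OF K] J by auto
  have "I \<noteq> {}" using lat_nonempty[OF I] .
  consider (outside) "I \<inter> J = {}" | (above) "J \<subseteq> I" | (in_child) "I \<subseteq> K"
    | (in_sibling) "I \<subseteq> J" "I \<noteq> J" "I \<inter> K = {}"
    using lat_cases_child[OF J K I] by blast
  then show ?thesis
  proof cases
    case outside
    moreover have "I \<inter> K = {}" using outside KJ by blast
    moreover have "I \<notin> subintervals L K" "I \<notin> strict_subintervals L J"
      using outside KJ \<open>I \<noteq> {}\<close> unfolding subintervals_def strict_subintervals_def by auto
    ultimately show ?thesis by (simp add: bump_mass_of_disjoint)
  next
    case above
    then have "I \<notin> subintervals L K" "I \<notin> strict_subintervals L J"
      using KJ unfolding subintervals_def strict_subintervals_def by auto
    then show ?thesis using above KJ pos by (simp add: bump_mass_of_superset)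
  next
    case in_child
    then have "I \<in> subintervals L K" "I \<in> strict_subintervals L J"
      using I KJ unfolding subintervals_def strict_subintervals_def by auto
    then show ?thesis using in_child KJ I by (simp add: bump_mass_of_subset)
  next
    case in_sibling
    then have "I \<notin> subintervals L K" "I \<in> strict_subintervals L J"
      using I \<open>I \<noteq> {}\<close> unfolding subintervals_def strict_subintervals_def by auto
    then show ?thesis using in_sibling I by (simp add: bump_mass_of_subset bump_mass_of_disjoint)
  qed
qed

definition jump :: "real set \<Rightarrow> real set \<Rightarrow> real" where
  "jump J K = sub_sum K / measure lebesgue K - strict_sub_sum J / measure lebesgue J"

lemma avg_child_diff:
  assumes J: "J \<in> lat L" and K: "K \<in> child L J"
  shows "avg K (balayage L a) - avg J (balayage L a) = jump J K"
proof -
  let ?inK = "\<lambda>I. if I \<in> subintervals L K then a I / measure lebesgue K else 0"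
  let ?inJ = "\<lambda>I. if I \<in> strict_subintervals L J then a I / measure lebesgue J else 0"
  have "((\<lambda>I. bump_mass K I / measure lebesgue K - bump_mass J I / measure lebesgue J)
      has_sum avg K (balayage L a) - avg J (balayage L a)) (lat L)"
    by (intro has_sum_diff has_sum_avg_balayage child_lat[OF K] J)
  then have "((\<lambda>I. ?inK I - ?inJ I) has_sum avg K (balayage L a) - avg J (balayage L a)) (lat L)"
    by (rule has_sum_cong[THEN iffD1, rotated]) (rule bump_mass_child_diff[OF J K])
  moreover have "((\<lambda>I. ?inK I - ?inJ I) has_sum jump J K) (lat L)"
    unfolding jump_def sub_sum_def strict_sub_sum_def
    using summable_on_and_infsum_abs_le(1)[OF child_lat[OF K] order_refl]
      summable_on_and_infsum_abs_le(1)[OF J strict_subintervals_subset]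
    by (intro has_sum_diff has_sum_extend_by_zero has_sum_divide_const has_sum_infsum)
      (auto simp: subintervals_def strict_subintervals_def)
  ultimately show ?thesis by (rule has_sum_unique)
qed

lemma Delta_balayage_eq:
  assumes J: "J \<in> lat L"
  shows "Delta L J (balayage L a) x = (\<Sum>K\<in>child L J. indicator K x * jump J K)"
proof -
  have "Delta L J (balayage L a) x
      = (\<Sum>K\<in>child L J. indicator K x * avg K (balayage L a)) - avg J (balayage L a) * indicator J x"
    unfolding Delta_def E_def by (simp add: mult.commute)
  also have "\<dots> = (\<Sum>K\<in>child L J. indicator K x * (avg K (balayage L a) - avg J (balayage L a)))"
    by (simp add: indicator_eq_sum_child[OF J] sum_distrib_left sum_subtractf algebra_simps)
  also have "\<dots> = (\<Sum>K\<in>child L J. indicator K x * jump J K)"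
    using avg_child_diff[OF J] by simp
  finally show ?thesis .
qed

lemma Delta_balayage_outside: "J \<in> lat L \<Longrightarrow> x \<notin> J \<Longrightarrow> Delta L J (balayage L a) x = 0"
  unfolding Delta_balayage_eq using child_subset by (intro sum.neutral) (fastforce simp: indicator_def)

lemma Delta_balayage_measurable [measurable]:
  assumes J: "J \<in> lat L" shows "Delta L J (balayage L a) \<in> borel_measurable lebesgue"
proof -
  have "Delta L J (balayage L a) = (\<lambda>x. \<Sum>K\<in>child L J. indicator K x * jump J K)"
    using Delta_balayage_eq[OF J] by blast
  also have "\<dots> \<in> borel_measurable lebesgue"
    using lat_sets[OF child_lat] by (intro borel_measurable_sum) simp
  finally show ?thesis .
qed

lemma abs_jump_le: "J \<in> lat L \<Longrightarrow> K \<in> child L J \<Longrightarrow> \<bar>jump J K\<bar> \<le> 2 * C"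
proof -
  assume J: "J \<in> lat L" and K: "K \<in> child L J"
  have "\<bar>sub_sum K / measure lebesgue K\<bar> \<le> C" "\<bar>strict_sub_sum J / measure lebesgue J\<bar> \<le> C"
    using abs_sub_sum_le abs_strict_sub_sum_le lat_measure_pos child_lat[OF K] J
    by (auto simp: divide_le_eq)
  then show ?thesis unfolding jump_def by linarith
qed

lemma abs_Delta_balayage_le: "J \<in> lat L \<Longrightarrow> \<bar>Delta L J (balayage L a) x\<bar> \<le> 2 * C"
  unfolding Delta_balayage_eq using carleson_pos abs_jump_le
  by (intro abs_sum_indicator_mult_disjoint_le finite_child child_pairwise_disjnt) auto

lemma BMO_C2_balayage_le: "BMO_C2 L (balayage L a) \<le> ennreal (2 * C)"
  unfolding BMO_C2_def Linf_norm_def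
  using abs_Delta_balayage_le by (intro SUP_least Inf_lower) (simp add: ennreal_leI)

subsection \<open>The square function\<close>

definition Delta_energy :: "real set \<Rightarrow> real" where
  "Delta_energy J = (\<Sum>K\<in>child L J. measure lebesgue K * (jump J K)\<^sup>2)"

lemma Delta_energy_nonneg: "0 \<le> Delta_energy J"
  unfolding Delta_energy_def by (intro sum_nonneg) simp

lemma nn_integral_Delta_balayage_sq:
  assumes J: "J \<in> lat L"
  shows "(\<integral>\<^sup>+x. ennreal ((Delta L J (balayage L a) x)\<^sup>2) \<partial>lebesgue) = ennreal (Delta_energy J)"
proof -
  have "ennreal ((Delta L J (balayage L a) x)\<^sup>2) = (\<Sum>K\<in>child L J. ennreal ((jump J K)\<^sup>2) * indicator K x)" for x
  proof -
    have "ennreal ((Delta L J (balayage L a) x)\<^sup>2) = ennreal (\<Sum>K\<in>child L J. indicator K x * (jump J K)\<^sup>2)"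
      unfolding Delta_balayage_eq[OF J]
      by (simp add: power2_sum_indicator_mult_disjoint[OF finite_child[OF J] child_pairwise_disjnt])
    also have "\<dots> = (\<Sum>K\<in>child L J. ennreal (indicator K x * (jump J K)\<^sup>2))"
      by (rule sum_ennreal[symmetric]) simp
    also have "\<dots> = (\<Sum>K\<in>child L J. ennreal ((jump J K)\<^sup>2) * indicator K x)"
      by (intro sum.cong refl) (simp add: indicator_def)
    finally show ?thesis .
  qed
  then have "(\<integral>\<^sup>+x. ennreal ((Delta L J (balayage L a) x)\<^sup>2) \<partial>lebesgue)
      = (\<Sum>K\<in>child L J. \<integral>\<^sup>+x. ennreal ((jump J K)\<^sup>2) * indicator K x \<partial>lebesgue)"
    using lat_sets[OF child_lat] by (simp add: nn_integral_sum)
  also have "\<dots> = (\<Sum>K\<in>child L J. ennreal (measure lebesgue K * (jump J K)\<^sup>2))"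
  proof (intro sum.cong refl)
    fix K assume K: "K \<in> child L J"
    have "(\<integral>\<^sup>+x. ennreal ((jump J K)\<^sup>2) * indicator K x \<partial>lebesgue) = ennreal ((jump J K)\<^sup>2) * emeasure lebesgue K"
      by (rule nn_integral_cmult_indicator) (rule lat_sets[OF child_lat[OF K]])
    then show "(\<integral>\<^sup>+x. ennreal ((jump J K)\<^sup>2) * indicator K x \<partial>lebesgue) = ennreal (measure lebesgue K * (jump J K)\<^sup>2)"
      by (simp only: lat_emeasure[OF child_lat[OF K]]) (simp add: ennreal_mult' mult.commute)
  qed
  also have "\<dots> = ennreal (Delta_energy J)"
    unfolding Delta_energy_def by (rule sum_ennreal) simp
  finally show ?thesis .
qed

lemma Delta_energy_eq:
  assumes J: "J \<in> lat L"
  shows "Delta_energy J = (\<Sum>K\<in>child L J. (sub_sum K)\<^sup>2 / measure lebesgue K)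
    - (strict_sub_sum J)\<^sup>2 / measure lebesgue J"
proof -
  let ?m = "measure lebesgue" and ?r = "strict_sub_sum J / measure lebesgue J"
  have expand: "?m K * (jump J K)\<^sup>2 = (sub_sum K)\<^sup>2 / ?m K - 2 * ?r * sub_sum K + ?r\<^sup>2 * ?m K"
    if "K \<in> child L J" for K
    using lat_measure_pos[OF child_lat[OF that]] lat_measure_pos[OF J] unfolding jump_def
    by (simp add: power2_eq_square field_simps)
  have "Delta_energy J = (\<Sum>K\<in>child L J. (sub_sum K)\<^sup>2 / ?m K)
      - 2 * ?r * (\<Sum>K\<in>child L J. sub_sum K) + ?r\<^sup>2 * (\<Sum>K\<in>child L J. ?m K)"
    unfolding Delta_energy_def using expand
    by (simp add: sum.distrib sum_subtractf sum_distrib_left)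
  also have "\<dots> = (\<Sum>K\<in>child L J. (sub_sum K)\<^sup>2 / ?m K) - (strict_sub_sum J)\<^sup>2 / ?m J"
    using lat_measure_pos[OF J]
    by (simp add: sum_sub_sum_child[OF J] sum_measure_child[OF J] power2_eq_square field_simps)
  finally show ?thesis .
qed

definition quad :: "real set \<Rightarrow> real" where
  "quad J = (sub_sum J)\<^sup>2 / measure lebesgue J"

lemma quad_nonneg: "0 \<le> quad J"
  unfolding quad_def by simp

lemma quad_le: "J \<in> lat L \<Longrightarrow> quad J \<le> C\<^sup>2 * measure lebesgue J"
proof -
  assume J: "J \<in> lat L"
  have "(sub_sum J)\<^sup>2 \<le> (C * measure lebesgue J)\<^sup>2"
    using abs_sub_sum_le[OF J] by (metis abs_ge_zero power2_abs power_mono)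
  then show ?thesis
    unfolding quad_def using lat_measure_pos[OF J] by (simp add: divide_le_eq power2_eq_square algebra_simps)
qed

lemma Delta_energy_le:
  assumes J: "J \<in> lat L"
  shows "Delta_energy J \<le> (\<Sum>K\<in>child L J. quad K) - quad J + 2 * C * \<bar>a J\<bar>"
proof -
  let ?m = "measure lebesgue J"
  have "(sub_sum J)\<^sup>2 - (strict_sub_sum J)\<^sup>2 = a J * (sub_sum J + strict_sub_sum J)"
    using sub_sum_eq[OF J] by (simp add: power2_eq_square algebra_simps)
  also have "\<dots> \<le> \<bar>a J\<bar> * \<bar>sub_sum J + strict_sub_sum J\<bar>"
    by (metis abs_ge_self abs_mult)
  also have "\<dots> \<le> \<bar>a J\<bar> * (\<bar>sub_sum J\<bar> + \<bar>strict_sub_sum J\<bar>)"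
    by (intro mult_left_mono abs_triangle_ineq abs_ge_zero)
  also have "\<dots> \<le> \<bar>a J\<bar> * (2 * C * ?m)"
    using abs_sub_sum_le[OF J] abs_strict_sub_sum_le[OF J] by (intro mult_left_mono) auto
  finally have "(sub_sum J)\<^sup>2 / ?m - (strict_sub_sum J)\<^sup>2 / ?m \<le> 2 * C * \<bar>a J\<bar>"
    using lat_measure_pos[OF J] by (simp add: diff_divide_distrib[symmetric] divide_le_eq algebra_simps)
  then show ?thesis using Delta_energy_eq[OF J] unfolding quad_def by simp
qed

context
  fixes I0 :: "real set"
  assumes I0: "I0 \<in> lat L"
begin

definition gen_below :: "nat \<Rightarrow> real set set" where
  "gen_below m = {J \<in> L (rk L I0 + int m). J \<subseteq> I0}"

text \<open>Every subinterval of \<open>I0\<close> lies in exactly one \<open>splitting m\<close>, namely for \<open>m\<close> its rank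
  relative to \<open>I0\<close>; between generations \<open>m\<close> and \<open>m + 1\<close> only these intervals are refined.\<close>

definition splitting :: "nat \<Rightarrow> real set set" where
  "splitting m = {J \<in> gen_below m. rk L J = rk L I0 + int m}"

definition quad_sum :: "nat \<Rightarrow> real" where
  "quad_sum m = (\<Sum>J\<in>gen_below m. quad J)"

lemma gen_below_lat: "J \<in> gen_below m \<Longrightarrow> J \<in> lat L"
  unfolding gen_below_def by auto

lemma gen_below_0: "gen_below 0 = {I0}"
proof -
  have "J = I0" if "J \<in> L (rk L I0)" "J \<subseteq> I0" for J
    using that gen_eq_if_not_disjoint[OF that(1) gen_rank[OF I0]] gen_nonempty[OF that(1)] by blast
  then show ?thesis using gen_rank[OF I0] unfolding gen_below_def by auto
qed

lemma gen_below_Suc: "gen_below (Suc m) = (\<Union>J\<in>gen_below m. next_gen (rk L I0 + int m) J)"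
proof
  let ?n = "rk L I0 + int m"
  show "gen_below (Suc m) \<subseteq> (\<Union>J\<in>gen_below m. next_gen ?n J)"
  proof
    fix K assume "K \<in> gen_below (Suc m)"
    then have K: "K \<in> L (?n + 1)" "K \<subseteq> I0" unfolding gen_below_def by (simp_all add: ac_simps)
    obtain J where J: "J \<in> L ?n" "K \<subseteq> J" using gen_parent[OF K(1)] by blast
    have "J \<subseteq> I0"
      using gen_subset_or_disjoint[of "rk L I0" ?n I0 J] gen_rank[OF I0] J K(2) gen_nonempty[OF K(1)] by auto
    then show "K \<in> (\<Union>J\<in>gen_below m. next_gen ?n J)"
      using J K(1) unfolding gen_below_def next_gen_def by blast
  qed
  show "(\<Union>J\<in>gen_below m. next_gen ?n J) \<subseteq> gen_below (Suc m)"
    unfolding gen_below_def next_gen_def by (auto simp: ac_simps)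
qed

lemma finite_gen_below: "finite (gen_below m)"
proof (induction m)
  case (Suc m)
  then show ?case
    unfolding gen_below_Suc by (intro finite_UN_I finite_next_gen) (auto simp: gen_below_def)
qed (simp add: gen_below_0)

lemma quad_sum_Suc: "quad_sum (Suc m) - quad_sum m = (\<Sum>J\<in>splitting m. (\<Sum>K\<in>child L J. quad K) - quad J)"
proof -
  let ?n = "rk L I0 + int m"
  have "quad_sum (Suc m) = (\<Sum>J\<in>gen_below m. \<Sum>K\<in>next_gen ?n J. quad K)"
    unfolding quad_sum_def gen_below_Suc
  proof (rule sum.UNION_disjoint[OF finite_gen_below])
    show "\<forall>J\<in>gen_below m. finite (next_gen ?n J)"
      using finite_next_gen unfolding gen_below_def by blast
    show "\<forall>J\<in>gen_below m. \<forall>J'\<in>gen_below m. J \<noteq> J' \<longrightarrow> next_gen ?n J \<inter> next_gen ?n J' = {}"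
      using next_gen_disjoint unfolding gen_below_def by blast
  qed
  then have "quad_sum (Suc m) - quad_sum m = (\<Sum>J\<in>gen_below m. (\<Sum>K\<in>next_gen ?n J. quad K) - quad J)"
    unfolding quad_sum_def by (simp add: sum_subtractf)
  also have "\<dots> = (\<Sum>J\<in>gen_below m. if rk L J = ?n then (\<Sum>K\<in>child L J. quad K) - quad J else 0)"
    by (intro sum.cong refl) (simp add: next_gen_eq gen_below_def)
  also have "\<dots> = (\<Sum>J\<in>splitting m. (\<Sum>K\<in>child L J. quad K) - quad J)"
    unfolding splitting_def by (rule sum.inter_filter[OF finite_gen_below, symmetric])
  finally show ?thesis .
qed

lemma quad_sum_le: "quad_sum m \<le> C\<^sup>2 * measure lebesgue I0"
proof -
  have "quad_sum m \<le> C\<^sup>2 * (\<Sum>J\<in>gen_below m. measure lebesgue J)"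
    unfolding quad_sum_def sum_distrib_left by (intro sum_mono quad_le gen_below_lat)
  also have "(\<Sum>J\<in>gen_below m. measure lebesgue J) = measure lebesgue (\<Union>(gen_below m))"
    using finite_gen_below lat_fmeasurable[OF gen_below_lat]
      pairwise_subset[OF gen_pairwise_disjnt, of "gen_below m"]
    by (intro measure_Union'[symmetric]) (auto simp: gen_below_def)
  also have "\<dots> \<le> measure lebesgue I0"
    using finite_gen_below lat_sets[OF gen_below_lat] lat_fmeasurable[OF I0]
    by (intro measure_mono_fmeasurable sets.finite_Union) (auto simp: gen_below_def)
  finally show ?thesis by (simp add: mult_left_mono)
qed

lemma splitting_subset: "splitting m \<subseteq> subintervals L I0"
  unfolding splitting_def gen_below_def subintervals_def by auto

lemma finite_splitting: "finite (splitting m)"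
  unfolding splitting_def using finite_gen_below by simp

lemma subinterval_in_splitting:
  assumes J: "J \<in> subintervals L I0" shows "J \<in> splitting (nat (rk L J - rk L I0))"
proof -
  have J': "J \<in> lat L" "J \<subseteq> I0" using J unfolding subintervals_def by auto
  have "rk L I0 \<le> rk L J"
  proof (rule ccontr)
    assume "\<not> rk L I0 \<le> rk L J"
    then have "I0 \<subseteq> J \<or> J \<inter> I0 = {}"
      using gen_subset_or_disjoint[OF _ gen_rank[OF J'(1)] gen_rank[OF I0]] by simp
    then have "J = I0" using J' lat_nonempty[OF J'(1)] by blast
    then show False using \<open>\<not> rk L I0 \<le> rk L J\<close> by simp
  qed
  then show ?thesis
    unfolding splitting_def gen_below_def using gen_rank[OF J'(1)] J'(2) by simp
qed

lemma sum_Delta_energy_splitting_le: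
  "(\<Sum>J\<in>(\<Union>m<M. splitting m). Delta_energy J) \<le> 3 * C\<^sup>2 * measure lebesgue I0"
proof -
  let ?U = "\<Union>m<M. splitting m"
  have disjoint: "\<forall>m\<in>{..<M}. \<forall>m'\<in>{..<M}. m \<noteq> m' \<longrightarrow> splitting m \<inter> splitting m' = {}"
    unfolding splitting_def by auto
  have sum_U: "(\<Sum>J\<in>?U. f J) = (\<Sum>m<M. \<Sum>J\<in>splitting m. f J)" for f :: "real set \<Rightarrow> real"
    using finite_splitting disjoint by (intro sum.UNION_disjoint) auto
  have step: "(\<Sum>J\<in>splitting m. Delta_energy J)
      \<le> (quad_sum (Suc m) - quad_sum m) + 2 * C * (\<Sum>J\<in>splitting m. \<bar>a J\<bar>)" for m
  proof -
    have "(\<Sum>J\<in>splitting m. Delta_energy J)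
        \<le> (\<Sum>J\<in>splitting m. ((\<Sum>K\<in>child L J. quad K) - quad J) + 2 * C * \<bar>a J\<bar>)"
      using Delta_energy_le gen_below_lat unfolding splitting_def by (intro sum_mono) blast
    then show ?thesis by (simp add: quad_sum_Suc sum.distrib sum_distrib_left)
  qed
  have abs_sum_le: "(\<Sum>J\<in>?U. \<bar>a J\<bar>) \<le> C * measure lebesgue I0"
  proof -
    have "finite ?U" "?U \<subseteq> subintervals L I0" using finite_splitting splitting_subset by auto
    then show ?thesis using summable_on_and_infsum_abs_le(2)[OF I0, of ?U] by simp
  qed
  have "(\<Sum>J\<in>?U. Delta_energy J) \<le> (\<Sum>m<M. (quad_sum (Suc m) - quad_sum m) + 2 * C * (\<Sum>J\<in>splitting m. \<bar>a J\<bar>))"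
    unfolding sum_U by (intro sum_mono step)
  also have "\<dots> = (quad_sum M - quad_sum 0) + 2 * C * (\<Sum>J\<in>?U. \<bar>a J\<bar>)"
    by (simp add: sum.distrib sum_distrib_left sum_lessThan_telescope sum_U)
  also have "\<dots> \<le> C\<^sup>2 * measure lebesgue I0 + 2 * C * (C * measure lebesgue I0)"
    using quad_sum_le[of M] quad_nonneg[of I0] carleson_pos abs_sum_le
    by (intro add_mono mult_left_mono) (auto simp: quad_sum_def gen_below_0)
  finally show ?thesis by (simp add: power2_eq_square algebra_simps)
qed

lemma sum_Delta_energy_le:
  assumes F: "finite F" "F \<subseteq> subintervals L I0"
  shows "(\<Sum>J\<in>F. Delta_energy J) \<le> 3 * C\<^sup>2 * measure lebesgue I0"
proof -
  obtain M where M: "\<forall>J\<in>F. nat (rk L J - rk L I0) < M"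
    using F(1) finite_nat_set_iff_bounded[of "(\<lambda>J. nat (rk L J - rk L I0)) ` F"] by auto
  have "F \<subseteq> (\<Union>m<M. splitting m)"
    using M subinterval_in_splitting F(2) by blast
  then have "(\<Sum>J\<in>F. Delta_energy J) \<le> (\<Sum>J\<in>(\<Union>m<M. splitting m). Delta_energy J)"
    using finite_splitting Delta_energy_nonneg by (intro sum_mono2) auto
  also have "\<dots> \<le> 3 * C\<^sup>2 * measure lebesgue I0"
    by (rule sum_Delta_energy_splitting_le)
  finally show ?thesis .
qed

lemma set_nn_integral_square_function_le:
  "(\<integral>\<^sup>+x\<in>I0. (\<Sum>\<^sub>\<infinity>J\<in>{J\<in>lat L. J \<subseteq> I0}. ennreal ((Delta L J (balayage L a) x)\<^sup>2)) \<partial>lebesgue)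
    \<le> ennreal (3 * C\<^sup>2 * measure lebesgue I0)"
proof -
  let ?S = "subintervals L I0" and ?D = "\<lambda>J x. ennreal ((Delta L J (balayage L a) x)\<^sup>2)"
  have "(\<Sum>\<^sub>\<infinity>J\<in>?S. ?D J x) * indicator I0 x = (\<Sum>\<^sub>\<infinity>J\<in>?S. ?D J x)" for x
    unfolding subintervals_def
    by (cases "x \<in> I0") (auto intro!: infsum_0 Delta_balayage_outside simp del: in_lat_iff)
  then have "(\<integral>\<^sup>+x\<in>I0. (\<Sum>\<^sub>\<infinity>J\<in>?S. ?D J x) \<partial>lebesgue) = (\<integral>\<^sup>+x. (\<Sum>\<^sub>\<infinity>J\<in>?S. ?D J x) \<partial>lebesgue)"
    by simp
  also have "\<dots> = (\<Sum>\<^sub>\<infinity>J\<in>?S. ennreal (Delta_energy J))"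
    using countable_subintervals nn_integral_Delta_balayage_sq
    by (subst nn_integral_infsum) (auto simp: subintervals_def intro!: infsum_cong)
  also have "\<dots> = (SUP F\<in>{F. finite F \<and> F \<subseteq> ?S}. (\<Sum>J\<in>F. ennreal (Delta_energy J)))"
    by (rule nonneg_infsum_complete) simp
  also have "\<dots> \<le> ennreal (3 * C\<^sup>2 * measure lebesgue I0)"
    using sum_Delta_energy_le Delta_energy_nonneg by (intro SUP_least) (simp add: sum_ennreal ennreal_leI)
  finally show ?thesis unfolding subintervals_def .
qed

end

lemma BMO_C1_balayage_le: "BMO_C1 L (balayage L a) \<le> ennreal (2 * C)"
  unfolding BMO_C1_def
proof (rule SUP_least)
  fix I assume I: "I \<in> lat L"
  let ?X = "\<integral>\<^sup>+x\<in>I. (\<Sum>\<^sub>\<infinity>J\<in>{J\<in>lat L. J \<subseteq> I}. ennreal ((Delta L J (balayage L a) x)\<^sup>2)) \<partial>lebesgue"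
  have "ennreal (1 / measure lebesgue I) * ?X \<le> ennreal (1 / measure lebesgue I) * ennreal (3 * C\<^sup>2 * measure lebesgue I)"
    by (intro mult_left_mono set_nn_integral_square_function_le[OF I]) simp
  also have "\<dots> = ennreal (3 * C\<^sup>2)"
    using lat_measure_pos[OF I] by (simp add: ennreal_mult'[symmetric])
  also have "\<dots> \<le> ennreal ((2 * C)\<^sup>2)"
    by (intro ennreal_leI) (simp add: power2_eq_square)
  finally show "ennsqrt (ennreal (1 / measure lebesgue I) * ?X) \<le> ennreal (2 * C)"
    using carleson_pos by (intro ennsqrt_le_ennreal) simp_all
qed

lemma BMO_norm_balayage_le: "BMO_norm L (balayage L a) \<le> ennreal (2 * C)"
  unfolding BMO_norm_def using BMO_C1_balayage_le BMO_C2_balayage_le by simp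

lemma in_mBMO_balayage: "in_mBMO L (balayage L a)"
  unfolding in_mBMO_def locally_integrable_def
  using has_sum_set_integral_balayage(1) BMO_C1_balayage_le BMO_C2_balayage_le
  by (auto intro: le_less_trans)

end

theorem theorem2:
  fixes L :: "int \<Rightarrow> real set set" and a :: "real set \<Rightarrow> real"
  assumes "lattice L"
    and "carleson_seq L (\<lambda>I. \<bar>a I\<bar>)"
    and "AE x in lebesgue. abs_balayage L a x < \<infinity>"
    and "locally_integrable_nn (abs_balayage L a)"
  shows "in_mBMO L (balayage L a) \<and>
         BMO_norm L (balayage L a) \<le> ennreal (2 * Carl L (\<lambda>I. \<bar>a I\<bar>))"
proof -
  have carleson: "carleson_balayage L a C" if "carleson_bound L (\<lambda>I. \<bar>a I\<bar>) C" for C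
    using assms(1,3,4) that by unfold_locales
  obtain C0 where C0: "carleson_bound L (\<lambda>I. \<bar>a I\<bar>) C0"
    using assms(2) unfolding carleson_seq_def by blast
  have "BMO_norm L (balayage L a) \<le> ennreal (2 * Carl L (\<lambda>I. \<bar>a I\<bar>))"
    unfolding Carl_def using C0 carleson_balayage.BMO_norm_balayage_le[OF carleson]
    by (intro ennreal_le_mult_Inf) (auto simp: carleson_bound_def)
  then show ?thesis
    using carleson_balayage.in_mBMO_balayage[OF carleson[OF C0]] by simp
qed

end
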